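(* Let $S$ be a finite semigroup. If $S$ is pseudo-nilpotent and the lower non-nilpotent graph $\mathcal{L}_S$ has no edges, then the upper non-nilpotent graph $\mathcal{N}_S$ has no edges.
   Context: For a semigroup $S$, $S^1$ denotes $S$ with an identity adjoined (if $S$ has none). For $x,y\in S$ and $z_1,z_2,\ldots\in S^1$ define recursively $\lambda_0=x$, $\rho_0=y$, $\lambda_{n+1}=\lambda_n z_{n+1}\rho_n$, $\rho_{n+1}=\rho_n z_{n+1}\lambda_n$; write $\lambda_n(x,y,z_1,\ldots,z_n)$ and $\rho_n(x,y,z_1,\ldots,z_n)$. A semigroup $S$ is nilpotent (in the sense of Mal'cev) if there is a positive integer $n$ with $\lambda_n(a,b,c_1,\ldots,c_n)=\rho_n(a,b,c_1,\ldots,c_n)$ for all $a,b\in S$ and $c_1,\ldots,c_n\in S^1$. $\langle X\rangle$ denotes the subsemigroup generated by $X$. The upper non-nilpotent graph $\mathcal{N}_S$ has vertex set $S$, with an edge between $x$ and $y$ iff $\langle x,y\rangle$ is not nilpotent. The lower non-nilpotent graph $\mathcal{L}_S$ has vertex set $S$, with an edge between distinct $x,y\in S$ iff there exist $n\ge 1$ and $w_1,\ldots,w_n\in\langle x,y\rangle^1$ with $x=\lambda_n(x,y,w_1,\ldots,w_n)$ and $y=\rho_n(x,y,w_1,\ldots,w_n)$. The empty set is regarded as an ideal; for an ideal $I$ of $S$, $S/I$ is the Rees factor semigroup, with $S/\emptyset=S$. A semigroup $S$ is pseudo-nilpotent if the following holds: whenever $x,y\in S$, $w_1,\ldots,w_m\in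 S^1$, $T$ is the subsemigroup generated by $x,y$ and those $w_i$ lying in $S$, $I$ is an ideal (possibly empty) of $T$, and $t<m$ are non-negative integers such that, writing $\lambda_k=\lambda_k(x,y,w_1,\ldots,w_k)$ and $\rho_k=\rho_k(x,y,w_1,\ldots,w_k)$, one has $\lambda_t\neq\rho_t$, $(\lambda_t,\rho_t)=(\lambda_m,\rho_m)$ and $\lambda_m,\rho_m\notin I$, then for every $0\le i\le m$ there is an edge in $\mathcal{N}_{T/I}$ between (the images of) $\lambda_i$ and $\rho_i$. *)

theory Defs
  imports Main
begin

definition semigrp :: "'a set \<Rightarrow> ('a \<Rightarrow> 'a \<Rightarrow> 'a) \<Rightarrow> bool" where
  "semigrp S f \<longleftrightarrow> (\<forall>a\<in>S. \<forall>b\<in>S. f a b \<in> S) \<and>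
     (\<forall>a\<in>S. \<forall>b\<in>S. \<forall>c\<in>S. f (f a b) c = f a (f b c))"

text \<open>Elements of S^1 are represented as 'a option: None is the adjoined identity,
  Some c stands for c in S.\<close>
definition in_one :: "'a set \<Rightarrow> 'a option \<Rightarrow> bool" where
  "in_one S w \<longleftrightarrow> (case w of None \<Rightarrow> True | Some c \<Rightarrow> c \<in> S)"

definition mult3 :: "('a \<Rightarrow> 'a \<Rightarrow> 'a) \<Rightarrow> 'a \<Rightarrow> 'a option \<Rightarrow> 'a \<Rightarrow> 'a" where
  "mult3 f a z b = (case z of None \<Rightarrow> f a b | Some c \<Rightarrow> f (f a c) b)"

text \<open>lamrho f x y z n = (lambda_n(x,y,z_1,...,z_n), rho_n(x,y,z_1,...,z_n)).\<close>
primrec lamrho :: "('a \<Rightarrow> 'a \<Rightarrow> 'a) \<Rightarrow> 'a \<Rightarrow> 'a \<Rightarrow> (nat \<Rightarrow> 'a option) \<Rightarrow> nat \<Rightarrow> 'a \<times> 'a" where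
  "lamrho f x y z 0 = (x, y)"
| "lamrho f x y z (Suc n) =
     (let (l, r) = lamrho f x y z n in (mult3 f l (z (Suc n)) r, mult3 f r (z (Suc n)) l))"

definition lam :: "('a \<Rightarrow> 'a \<Rightarrow> 'a) \<Rightarrow> 'a \<Rightarrow> 'a \<Rightarrow> (nat \<Rightarrow> 'a option) \<Rightarrow> nat \<Rightarrow> 'a" where
  "lam f x y z n = fst (lamrho f x y z n)"

definition rho :: "('a \<Rightarrow> 'a \<Rightarrow> 'a) \<Rightarrow> 'a \<Rightarrow> 'a \<Rightarrow> (nat \<Rightarrow> 'a option) \<Rightarrow> nat \<Rightarrow> 'a" where
  "rho f x y z n = snd (lamrho f x y z n)"

text \<open>Mal'cev nilpotency of the semigroup (S, f).\<close>
definition nilpotent :: "'a set \<Rightarrow> ('a \<Rightarrow> 'a \<Rightarrow> 'a) \<Rightarrow> bool" where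
  "nilpotent S f \<longleftrightarrow> (\<exists>n>0. \<forall>a\<in>S. \<forall>b\<in>S. \<forall>c. (\<forall>i\<in>{1..n}. in_one S (c i)) \<longrightarrow>
       lam f a b c n = rho f a b c n)"

inductive_set gen :: "('a \<Rightarrow> 'a \<Rightarrow> 'a) \<Rightarrow> 'a set \<Rightarrow> 'a set" for f X where
  base: "x \<in> X \<Longrightarrow> x \<in> gen f X"
| mult: "a \<in> gen f X \<Longrightarrow> b \<in> gen f X \<Longrightarrow> f a b \<in> gen f X"

definition upper_edge :: "'a set \<Rightarrow> ('a \<Rightarrow> 'a \<Rightarrow> 'a) \<Rightarrow> 'a \<Rightarrow> 'a \<Rightarrow> bool" where
  "upper_edge S f x y \<longleftrightarrow> x \<in> S \<and> y \<in> S \<and> \<not> nilpotent (gen f {x, y}) f"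

definition lower_edge :: "'a set \<Rightarrow> ('a \<Rightarrow> 'a \<Rightarrow> 'a) \<Rightarrow> 'a \<Rightarrow> 'a \<Rightarrow> bool" where
  "lower_edge S f x y \<longleftrightarrow> x \<in> S \<and> y \<in> S \<and> x \<noteq> y \<and>
     (\<exists>n\<ge>1. \<exists>w. (\<forall>i\<in>{1..n}. in_one (gen f {x, y}) (w i)) \<and>
        x = lam f x y w n \<and> y = rho f x y w n)"

text \<open>Ideals (possibly empty) of (T, f).\<close>
definition is_ideal :: "'a set \<Rightarrow> ('a \<Rightarrow> 'a \<Rightarrow> 'a) \<Rightarrow> 'a set \<Rightarrow> bool" where
  "is_ideal T f I \<longleftrightarrow> I \<subseteq> T \<and> (\<forall>a\<in>I. \<forall>t\<in>T. f a t \<in> I \<and> f t a \<in> I)"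

text \<open>Rees factor semigroup T/I on 'a option: Some t for t in T - I, None is the
  zero (the class I), present only if I is nonempty; T/{} = T.\<close>
definition rees_carrier :: "'a set \<Rightarrow> 'a set \<Rightarrow> 'a option set" where
  "rees_carrier T I = Some ` (T - I) \<union> (if I = {} then {} else {None})"

definition rees_mult :: "('a \<Rightarrow> 'a \<Rightarrow> 'a) \<Rightarrow> 'a set \<Rightarrow> 'a option \<Rightarrow> 'a option \<Rightarrow> 'a option" where
  "rees_mult f I a b = (case (a, b) of
      (Some u, Some v) \<Rightarrow> (if f u v \<in> I then None else Some (f u v))
    | _ \<Rightarrow> None)"

definition rees_img :: "'a set \<Rightarrow> 'a \<Rightarrow> 'a option" where
  "rees_img I t = (if t \<in> I then None else Some t)"

definition pseudo_nilpotent :: "'a set \<Rightarrow> ('a \<Rightarrow> 'a \<Rightarrow> 'a) \<Rightarrow> bool" where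
  "pseudo_nilpotent S f \<longleftrightarrow>
    (\<forall>x\<in>S. \<forall>y\<in>S. \<forall>m w T I t.
       (\<forall>i\<in>{1..m}. in_one S (w i)) \<longrightarrow>
       T = gen f ({x, y} \<union> {c. \<exists>i\<in>{1..m}. w i = Some c}) \<longrightarrow>
       is_ideal T f I \<longrightarrow>
       t < m \<longrightarrow>
       lam f x y w t \<noteq> rho f x y w t \<longrightarrow>
       (lam f x y w t, rho f x y w t) = (lam f x y w m, rho f x y w m) \<longrightarrow>
       lam f x y w m \<notin> I \<longrightarrow> rho f x y w m \<notin> I \<longrightarrow>
       (\<forall>i\<le>m. upper_edge (rees_carrier T I) (rees_mult f I)
                 (rees_img I (lam f x y w i)) (rees_img I (rho f x y w i))))"

end

theory Submission
  imports Defs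
begin

text \<open>Take an edge x, y of the upper non-nilpotent graph for which the subsemigroup
  <x, y> is as small as possible. Since <x, y> is finite and not nilpotent, the pigeonhole
  principle applied to the pairs (lambda_i, rho_i) of a non-collapsing sequence yields
  u \<noteq> v in <x, y> and z_1, ..., z_k with (lambda_k, rho_k)(u, v, z) = (u, v).
  Pseudo-nilpotency with the empty ideal and t = 0 makes <u, v> non-nilpotent, so u, v is
  again an edge of the upper graph; by minimality <u, v> = <x, y>, hence the z_i lie in
  <u, v>^1 and u, v is an edge of the lower graph.\<close>

lemma lam_Suc: "lam f x y z (Suc n) = mult3 f (lam f x y z n) (z (Suc n)) (rho f x y z n)"
  and rho_Suc: "rho f x y z (Suc n) = mult3 f (rho f x y z n) (z (Suc n)) (lam f x y z n)"
  by (simp_all add: lam_def rho_def Let_def case_prod_beta)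

lemma lam_0 [simp]: "lam f x y z 0 = x"
  and rho_0 [simp]: "rho f x y z 0 = y"
  by (simp_all add: lam_def rho_def)

lemma lam_rho_shift:
  "lam f (lam f a b c t) (rho f a b c t) (\<lambda>i. c (i + t)) j = lam f a b c (j + t) \<and>
   rho f (lam f a b c t) (rho f a b c t) (\<lambda>i. c (i + t)) j = rho f a b c (j + t)"
  by (induction j) (simp_all add: lam_Suc rho_Suc)

lemma lam_eq_rho_mono:
  assumes "lam f a b c k = rho f a b c k" and "k \<le> n"
  shows "lam f a b c n = rho f a b c n"
  using assms(2,1) by (induction n rule: dec_induct) (simp_all add: lam_Suc rho_Suc)

lemma mult3_closed:
  assumes "\<forall>a\<in>T. \<forall>b\<in>T. f a b \<in> T" and "l \<in> T" "r \<in> T" "in_one T z"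
  shows "mult3 f l z r \<in> T"
  using assms by (cases z) (auto simp: mult3_def in_one_def)

lemma lam_rho_closed:
  assumes "\<forall>a\<in>T. \<forall>b\<in>T. f a b \<in> T" and "a \<in> T" "b \<in> T"
    and "\<forall>i\<in>{1..n}. in_one T (c i)" and "k \<le> n"
  shows "lam f a b c k \<in> T \<and> rho f a b c k \<in> T"
  using assms(5)
proof (induction k)
  case (Suc k)
  then have "in_one T (c (Suc k))" using assms(4) by auto
  with Suc assms(1) show ?case by (simp add: lam_Suc rho_Suc mult3_closed)
qed (use assms in simp)

lemma gen_least:
  assumes "X \<subseteq> A" and "\<forall>a\<in>A. \<forall>b\<in>A. f a b \<in> A"
  shows "gen f X \<subseteq> A"
proof
  fix x assume "x \<in> gen f X"
  then show "x \<in> A" by induction (use assms in auto)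
qed

lemma gen_closed: "\<forall>a\<in>gen f X. \<forall>b\<in>gen f X. f a b \<in> gen f X"
  by (auto intro: gen.mult)

lemma gen_pair_subset:
  assumes "u \<in> gen f X" "v \<in> gen f X"
  shows "gen f {u, v} \<subseteq> gen f X"
  using assms by (intro gen_least gen_closed) auto

lemma not_nilpotent_imp_cycle:
  assumes "finite T" and closed: "\<forall>a\<in>T. \<forall>b\<in>T. f a b \<in> T" and "\<not> nilpotent T f"
  obtains u v c k where "u \<in> T" "v \<in> T" "u \<noteq> v" "k \<ge> 1" "\<forall>i\<in>{1..k}. in_one T (c i)"
    "lam f u v c k = u" "rho f u v c k = v"
proof -
  define n where "n = card (T \<times> T) + 1"
  have "n > 0" by (simp add: n_def)
  with assms(3) obtain a b c where ab: "a \<in> T" "b \<in> T" and c: "\<forall>i\<in>{1..n}. in_one T (c i)"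
    and ne: "lam f a b c n \<noteq> rho f a b c n"
    unfolding nilpotent_def by blast
  define g where "g i = (lam f a b c i, rho f a b c i)" for i
  have "g ` {0..n} \<subseteq> T \<times> T"
    using lam_rho_closed[OF closed ab c] by (auto simp: g_def)
  with assms(1) have "\<not> inj_on g {0..n}"
    using card_inj_on_le[of g "{0..n}" "T \<times> T"] by (auto simp: n_def)
  then obtain i j where "i \<le> n" "j \<le> n" "i \<noteq> j" "g i = g j"
    unfolding inj_on_def by auto
  then obtain t m where tm: "t < m" "m \<le> n" "g t = g m"
    by (metis linorder_neqE_nat)
  define u v where "u = lam f a b c t" and "v = rho f a b c t"
  have "u \<noteq> v" using lam_eq_rho_mono[of f a b c t n] ne tm by (auto simp: u_def v_def)
  moreover have "u \<in> T" "v \<in> T"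
    using lam_rho_closed[OF closed ab c, of t] tm by (auto simp: u_def v_def)
  moreover have "\<forall>i\<in>{1..m - t}. in_one T (c (i + t))" using c tm by auto
  moreover have "lam f u v (\<lambda>i. c (i + t)) (m - t) = u" "rho f u v (\<lambda>i. c (i + t)) (m - t) = v"
    using lam_rho_shift[of f a b c t "m - t"] tm(1,3) by (auto simp: u_def v_def g_def)
  ultimately show thesis using tm(1) that[of u v "m - t" "\<lambda>i. c (i + t)"] by simp
qed

text \<open>The Rees quotient by the empty ideal is the semigroup itself, tagged with Some.\<close>

lemma gen_rees_empty:
  "a' \<in> gen (rees_mult f {}) {Some u, Some v} \<Longrightarrow> \<exists>a\<in>gen f {u, v}. a' = Some a"
proof (induction rule: gen.induct)
  case (base x) then show ?case by (auto intro: gen.base)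
next
  case (mult a b) then show ?case by (auto simp: rees_mult_def intro: gen.mult)
qed

lemma lam_rho_rees_empty:
  assumes "\<forall>i\<in>{1..n}. c i = None \<or> (\<exists>z. c i = Some (Some z))" and "k \<le> n"
  shows "lam (rees_mult f {}) (Some a) (Some b) c k = Some (lam f a b (\<lambda>i. map_option the (c i)) k) \<and>
     rho (rees_mult f {}) (Some a) (Some b) c k = Some (rho f a b (\<lambda>i. map_option the (c i)) k)"
  using assms(2)
proof (induction k)
  case (Suc k)
  then have "c (Suc k) = None \<or> (\<exists>z. c (Suc k) = Some (Some z))" using assms(1) by auto
  with Suc show ?case by (auto simp: lam_Suc rho_Suc mult3_def rees_mult_def)
qed simp

lemma nilpotent_rees_empty:
  assumes "nilpotent (gen f {u, v}) f"
  shows "nilpotent (gen (rees_mult f {}) {Some u, Some v}) (rees_mult f {})"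
proof -
  obtain n where n: "n > 0" and nil: "\<forall>a\<in>gen f {u, v}. \<forall>b\<in>gen f {u, v}. \<forall>c.
      (\<forall>i\<in>{1..n}. in_one (gen f {u, v}) (c i)) \<longrightarrow> lam f a b c n = rho f a b c n"
    using assms unfolding nilpotent_def by blast
  show ?thesis unfolding nilpotent_def
  proof (intro exI[of _ n] conjI ballI allI impI n)
    fix a' b' c
    assume a': "a' \<in> gen (rees_mult f {}) {Some u, Some v}"
      and b': "b' \<in> gen (rees_mult f {}) {Some u, Some v}"
      and c: "\<forall>i\<in>{1..n}. in_one (gen (rees_mult f {}) {Some u, Some v}) (c i)"
    obtain a b where ab: "a \<in> gen f {u, v}" "b \<in> gen f {u, v}" "a' = Some a" "b' = Some b"
      using gen_rees_empty[OF a'] gen_rees_empty[OF b'] by blast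
    have "c i = None \<or> (\<exists>z. c i = Some (Some z))"
      and "in_one (gen f {u, v}) (map_option the (c i))" if "i \<in> {1..n}" for i
    proof -
      have "in_one (gen (rees_mult f {}) {Some u, Some v}) (c i)" using c that by blast
      then show "c i = None \<or> (\<exists>z. c i = Some (Some z))"
        and "in_one (gen f {u, v}) (map_option the (c i))"
        by (cases "c i"; auto simp: in_one_def dest: gen_rees_empty)+
    qed
    then show "lam (rees_mult f {}) a' b' c n = rho (rees_mult f {}) a' b' c n"
      using lam_rho_rees_empty[of n c n f a b] nil ab by simp
  qed
qed

lemma pseudo_nilpotent_cycle_upper_edge:
  assumes pn: "pseudo_nilpotent S f" and "u \<in> S" "v \<in> S" "u \<noteq> v" "k \<ge> 1"
    and c: "\<forall>i\<in>{1..k}. in_one S (c i)"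
    and cycle: "lam f u v c k = u" "rho f u v c k = v"
  shows "upper_edge S f u v"
proof -
  define T where "T = gen f ({u, v} \<union> {z. \<exists>i\<in>{1..k}. c i = Some z})"
  have "upper_edge (rees_carrier T {}) (rees_mult f {}) (rees_img {} (lam f u v c 0))
      (rees_img {} (rho f u v c 0))"
    using pn[unfolded pseudo_nilpotent_def, rule_format, of u v k c T "{}" 0 0] assms
    by (simp add: T_def is_ideal_def)
  then have "\<not> nilpotent (gen (rees_mult f {}) {Some u, Some v}) (rees_mult f {})"
    by (simp add: upper_edge_def rees_img_def)
  then show ?thesis
    using nilpotent_rees_empty[of f u v] assms(2,3) by (auto simp: upper_edge_def)
qed

lemma upper_edge_descent:
  assumes "semigrp S f" "finite S" "pseudo_nilpotent S f" and "upper_edge S f x y"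
  obtains u v where "upper_edge S f u v"
    "gen f {u, v} \<subset> gen f {x, y} \<or> lower_edge S f u v"
proof -
  define T where "T = gen f {x, y}"
  have "T \<subseteq> S"
    using assms(1,4) gen_least[of "{x, y}" S f] by (auto simp: T_def semigrp_def upper_edge_def)
  then have "finite T" using assms(2) finite_subset by blast
  obtain u v c k where uv: "u \<in> T" "v \<in> T" "u \<noteq> v" "k \<ge> 1"
    and c: "\<forall>i\<in>{1..k}. in_one T (c i)" and cycle: "lam f u v c k = u" "rho f u v c k = v"
    using not_nilpotent_imp_cycle[OF \<open>finite T\<close> gen_closed[of f "{x, y}", folded T_def]] assms(4)
    unfolding T_def upper_edge_def by metis
  have "\<forall>i\<in>{1..k}. in_one S (c i)"
    using c \<open>T \<subseteq> S\<close> by (auto simp: in_one_def split: option.splits)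
  then have edge: "upper_edge S f u v"
    using pseudo_nilpotent_cycle_upper_edge[OF assms(3)] uv cycle \<open>T \<subseteq> S\<close> by blast
  have "gen f {u, v} \<subseteq> T" using uv by (simp add: T_def gen_pair_subset)
  moreover have "lower_edge S f u v" if "gen f {u, v} = T"
    using edge uv c cycle that
    by (auto simp: lower_edge_def upper_edge_def intro!: exI[of _ k] exI[of _ c])
  ultimately show thesis using edge that unfolding T_def by blast
qed

theorem proposition2p6:
  fixes S :: "'a set" and f :: "'a \<Rightarrow> 'a \<Rightarrow> 'a"
  assumes "semigrp S f"
    and "finite S"
    and "pseudo_nilpotent S f"
    and "\<forall>x\<in>S. \<forall>y\<in>S. \<not> lower_edge S f x y"
  shows "\<forall>x\<in>S. \<forall>y\<in>S. \<not> upper_edge S f x y"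
proof -
  have "\<not> upper_edge S f x y" for x y
  proof (induction "card (gen f {x, y})" arbitrary: x y rule: less_induct)
    case less
    show ?case
    proof
      assume edge: "upper_edge S f x y"
      then have "finite (gen f {x, y})"
        using assms(1,2) gen_least[of "{x, y}" S f]
        by (auto simp: semigrp_def upper_edge_def intro: finite_subset)
      obtain u v where "upper_edge S f u v" "gen f {u, v} \<subset> gen f {x, y} \<or> lower_edge S f u v"
        using upper_edge_descent[OF assms(1-3) edge] by blast
      then show False
        using less psubset_card_mono[OF \<open>finite (gen f {x, y})\<close>] assms(4)
        by (auto simp: upper_edge_def)
    qed
  qed
  then show ?thesis by blast
qed

end
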